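(* Let $A:[0,1]\to\mathbb{R}$, $A(x)=\sin^2(2\pi x)$, and let $T(x)=2x \pmod 1$ act on the circle $S^1=[0,1]/\{0\sim 1\}$, with inverse branches $\tau_1(x)=x/2$ and $\tau_2(x)=(x+1)/2$. Put $\hat m(A)=\frac{A(1/3)+A(2/3)}{2}$, $\eta(x)=\frac{x}{4}+\frac12$, $F(x)=A\left(\frac{x}{2}\right)+A\left(\frac{x}{4}+\frac12\right)$, and for $x\in[0,1]$ $$V_2(x)=\lim_{n\to\infty}\sum_{i=0}^{n-1}\bigl[F(\eta^i(x))-2\hat m(A)\bigr],$$ where $\eta^i$ is the $i$-th iterate of $\eta$ ($\eta^0=\mathrm{id}$). Define $V_1(x)=V_2\left(\frac{x+1}{2}\right)+A\left(\frac{x+1}{2}\right)-\hat m(A)$ and $$V(x)=V_1(x)\,I_{[0,1/2)}(x)+V_2(x)\,I_{[1/2,1]}(x).$$ Then $V$ is a calibrated subaction for $A$, with $\hat m(A)=\frac{A(1/3)+A(2/3)}{2}=m(A)$; that is, for every $x\in[0,1]$, $$V(x)=\max\Bigl\{A\left(\tfrac{x}{2}\right)+V\left(\tfrac{x}{2}\right),\,A\left(\tfrac{x+1}{2}\right)+V\left(\tfrac{x+1}{2}\right)\Bigr\}-m(A).$$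
   Context: $I_E$ denotes the indicator function of $E$. For continuous $A$, $m(A)=\sup\{\int A\,d\rho : \rho \text{ a } T\text{-invariant Borel probability}\}$. A calibrated subaction for $A$ is a continuous function $V:S^1\to\mathbb{R}$ such that $V(x)=\max_{T(y)=x}[A(y)+V(y)-m(A)]$ for all $x$. *)

theory Defs
  imports "HOL-Probability.Probability"
begin

definition A :: "real \<Rightarrow> real" where
  "A x = (sin (2 * pi * x))\<^sup>2"

text \<open>Doubling map on the circle, realised on [0,1) via the fractional part.\<close>
definition T :: "real \<Rightarrow> real" where
  "T x = frac (2 * x)"

definition T_invariant_prob :: "real measure \<Rightarrow> bool" where
  "T_invariant_prob M \<longleftrightarrow> prob_space M \<and> sets M = sets borel \<and>
     emeasure M {0..<1} = 1 \<and> distr M borel T = M"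

definition m :: "(real \<Rightarrow> real) \<Rightarrow> real" where
  "m f = (SUP M \<in> {M. T_invariant_prob M}. integral\<^sup>L M f)"

definition m_hat :: real where
  "m_hat = (A (1/3) + A (2/3)) / 2"

definition eta :: "real \<Rightarrow> real" where
  "eta x = x / 4 + 1 / 2"

definition F :: "real \<Rightarrow> real" where
  "F x = A (x / 2) + A (x / 4 + 1 / 2)"

definition V2 :: "real \<Rightarrow> real" where
  "V2 x = lim (\<lambda>n. \<Sum>i<n. F ((eta ^^ i) x) - 2 * m_hat)"

definition V1 :: "real \<Rightarrow> real" where
  "V1 x = V2 ((x + 1) / 2) + A ((x + 1) / 2) - m_hat"

definition V :: "real \<Rightarrow> real" where
  "V x = V1 x * indicator {0..<1/2} x + V2 x * indicator {1/2..1} x"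

end

theory Submission
  imports Defs
begin

(* The invariant measure equidistributed on the 2-cycle {1/3, 2/3} of T shows m(A) >= 3/4, and
   A <= 3/4 + W o T - W with W x = cos (4 pi x) / 6 gives the reverse inequality for every invariant
   measure. The point 2/3 is the fixed point of the contraction eta and F (2/3) = 2 m(A), so the
   series defining V2 converges geometrically and uniformly, A being Lipschitz. Since eta commutes
   with w |-> 2 - 2w, a telescoping argument gives V1 x = V2 (1 - x), hence V x = V2 (max x (1 - x)),
   and the two branches of the calibration equation at x become V2 x + m(A) and V2 (1 - x) + m(A).
   It remains to see V2 (1 - y) <= V2 y for y >= 1/2: comparing the two series termwise, the leading
   term sin (pi (y - 1/2)) dominates the sum of all the others. *)

lemma abs_cos_diff_le:
  fixes x y :: real
  shows "\<bar>cos x - cos y\<bar> \<le> \<bar>x - y\<bar>"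
proof -
  have "\<bar>cos x - cos y\<bar> = 2 * \<bar>sin ((x + y) / 2)\<bar> * \<bar>sin ((y - x) / 2)\<bar>"
    by (simp add: cos_diff_cos abs_mult)
  also have "\<dots> \<le> 2 * 1 * \<bar>(y - x) / 2\<bar>"
    by (intro mult_mono abs_sin_x_le_abs_x) auto
  finally show ?thesis by simp
qed

lemma sin_ge_cubic:
  fixes x :: real
  assumes "0 \<le> x"
  shows "x - x ^ 3 / 6 \<le> sin x"
proof -
  have "\<bar>sin x - x\<bar> \<le> x ^ 3 / 6"
    using Maclaurin_sin_bound[of x 3] assms
    by (simp add: eval_nat_numeral sin_coeff_def)
  then show ?thesis by linarith
qed

lemma sin_pi_ge_linear:
  assumes "0 \<le> s" "s \<le> 1/2"
  shows "sqrt 3 * pi * s / 3 \<le> sin (pi * s)"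
proof -
  have sqrt3: "sqrt 3 \<le> 17321 / 10000"
    by (rule real_le_lsqrt) (auto simp: power2_eq_square)
  have "pi \<le> 63 / 20"
    using pi_approx(2) by simp
  then have "(pi * s) ^ 2 \<le> (63 / 20 * (1/2)) ^ 2"
    using assms by (intro power_mono mult_mono) auto
  also have "\<dots> = 3969 / 1600"
    by (simp add: power2_eq_square)
  finally have "sqrt 3 / 3 \<le> 1 - (pi * s) ^ 2 / 6"
    using sqrt3 by linarith
  then have "pi * s * (sqrt 3 / 3) \<le> pi * s * (1 - (pi * s) ^ 2 / 6)"
    using assms by (intro mult_left_mono) auto
  also have "\<dots> = pi * s - (pi * s) ^ 3 / 6"
    by (simp add: algebra_simps eval_nat_numeral)
  also have "\<dots> \<le> sin (pi * s)"
    using assms by (intro sin_ge_cubic) simp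
  finally show ?thesis
    by (simp add: mult_ac)
qed

lemma A_eq_cos: "A x = (1 - cos (4 * pi * x)) / 2"
  unfolding A_def using cos_double_sin[of "2 * pi * x"] by (simp add: mult.assoc)

lemma A_diff_eq_cos: "A u - A v = (cos (4 * pi * v) - cos (4 * pi * u)) / 2"
  unfolding A_eq_cos by (simp add: field_simps)

lemma A_diff: "A u - A v = sin (2 * pi * (u + v)) * sin (2 * pi * (u - v))"
proof -
  have sum: "(4 * pi * v + 4 * pi * u) / 2 = 2 * pi * (u + v)"
    and diff: "(4 * pi * u - 4 * pi * v) / 2 = 2 * pi * (u - v)"
    by (simp_all add: field_simps)
  show ?thesis
    unfolding A_diff_eq_cos cos_diff_cos by (simp only: sum diff)
qed

lemma A_lipschitz: "\<bar>A u - A v\<bar> \<le> 2 * pi * \<bar>u - v\<bar>"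
proof -
  have "\<bar>A u - A v\<bar> \<le> \<bar>4 * pi * v - 4 * pi * u\<bar> / 2"
    unfolding A_diff_eq_cos using abs_cos_diff_le by simp
  also have "\<dots> = 2 * pi * \<bar>u - v\<bar>"
    by (simp add: abs_minus_commute abs_mult flip: right_diff_distrib)
  finally show ?thesis .
qed

lemma A_reflect: "A (1 - x) = A x"
  unfolding A_def by (simp add: right_diff_distrib sin_diff)

lemma continuous_A: "continuous_on S A"
  unfolding A_def[abs_def] by (intro continuous_intros)

lemma A_one_third: "A (1/3) = 3/4"
proof -
  have "2 * pi * (1/3) = pi - pi/3" by simp
  then show ?thesis
    unfolding A_def by (simp only: sin_pi_minus sin_60) (simp add: power_divide)
qed

lemma A_two_thirds: "A (2/3) = 3/4"
  using A_reflect[of "1/3"] A_one_third by simp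

lemma m_hat_eq: "m_hat = 3/4"
  unfolding m_hat_def A_one_third A_two_thirds by simp

lemma T_measurable: "T \<in> borel_measurable borel"
  unfolding T_def[abs_def] frac_def by measurable

lemma T_one_third: "T (1/3) = 2/3"
  unfolding T_def by (simp add: frac_eq)

lemma T_two_thirds: "T (2/3) = 1/3"
proof -
  have "\<lfloor>4/3 :: real\<rfloor> = 1"
    by (simp add: floor_eq_iff)
  then show ?thesis
    unfolding T_def frac_def by simp
qed

lemma cos_4pi_T: "cos (4 * pi * T x) = cos (8 * pi * x)"
proof -
  have "4 * pi * T x = 8 * pi * x - 2 * pi * of_int (2 * \<lfloor>2 * x\<rfloor>)"
    unfolding T_def frac_def by (simp add: algebra_simps)
  then show ?thesis
    by (simp only: cos_diff cos_int_2pin sin_int_2pin)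
qed

lemma A_le_coboundary: "A x \<le> 3/4 + cos (4 * pi * T x) / 6 - cos (4 * pi * x) / 6"
proof -
  define u where "u = cos (4 * pi * x)"
  have cos_T: "cos (4 * pi * T x) = 2 * u\<^sup>2 - 1"
    unfolding cos_4pi_T u_def using cos_double_cos[of "4 * pi * x"] by (simp add: mult.assoc)
  have "(1 - u) / 2 = 3/4 + (2 * u\<^sup>2 - 1) / 6 - u / 6 - (u + 1/2)\<^sup>2 / 3"
    by (simp add: power2_eq_square field_simps)
  moreover have "0 \<le> (u + 1/2)\<^sup>2 / 3"
    by simp
  ultimately show ?thesis
    unfolding A_eq_cos cos_T u_def[symmetric] by linarith
qed

lemma T_invariant_integral_comp:
  fixes g :: "real \<Rightarrow> real"
  assumes "T_invariant_prob M" "g \<in> borel_measurable borel"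
  shows "(\<integral>x. g (T x) \<partial>M) = (\<integral>x. g x \<partial>M)"
proof -
  from assms(1) have "sets M = sets borel" "distr M borel T = M"
    unfolding T_invariant_prob_def by auto
  have "T \<in> borel_measurable M"
    using T_measurable measurable_cong_sets[OF \<open>sets M = sets borel\<close>] by blast
  from integral_distr[OF this assms(2)] show ?thesis
    using \<open>distr M borel T = M\<close> by simp
qed

lemma T_invariant_integral_le_coboundary:
  fixes f W :: "real \<Rightarrow> real"
  assumes M: "T_invariant_prob M"
    and f: "f \<in> borel_measurable borel" "\<And>x. \<bar>f x\<bar> \<le> B"
    and W: "W \<in> borel_measurable borel" "\<And>x. \<bar>W x\<bar> \<le> B"
    and le: "\<And>x. f x \<le> c + W (T x) - W x"
  shows "integral\<^sup>L M f \<le> c"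
proof -
  from M interpret prob_space M
    unfolding T_invariant_prob_def by simp
  have sets: "sets M = sets borel"
    using M unfolding T_invariant_prob_def by simp
  have int: "integrable M g" if "g \<in> borel_measurable borel" "\<And>x. \<bar>g x\<bar> \<le> B" for g
    using that by (intro integrable_const_bound[where B = B]) (auto simp: measurable_cong_sets[OF sets])
  have int_WT: "integrable M (\<lambda>x. W (T x))"
    using W by (intro int) (auto intro: measurable_compose[OF T_measurable])
  have "integral\<^sup>L M f \<le> (\<integral>x. c + W (T x) - W x \<partial>M)"
    using int[OF f] int[OF W] int_WT le by (intro integral_mono) auto
  also have "\<dots> = c + (\<integral>x. W (T x) \<partial>M) - (\<integral>x. W x \<partial>M)"
    using W int_WT by (simp add: int prob_space)
  also have "\<dots> = c"
    using T_invariant_integral_comp[OF M W(1)] by simp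
  finally show ?thesis .
qed

lemma T_invariant_prob_uniform_orbit:
  assumes "finite P" "P \<noteq> {}" "P \<subseteq> {0..<1}" "T ` P = P"
  shows "T_invariant_prob (distr (measure_pmf (pmf_of_set P)) borel (\<lambda>x. x))"
proof -
  let ?p = "pmf_of_set P"
  let ?M = "distr (measure_pmf ?p) borel (\<lambda>x. x)"
  have "inj_on T P"
    using assms by (intro finite_surj_inj) auto
  then have "map_pmf T ?p = ?p"
    using assms map_pmf_of_set_inj by metis
  have "distr ?M borel T = distr (measure_pmf ?p) borel T"
    by (subst distr_distr) (auto simp: T_measurable comp_def)
  also have "\<dots> = distr (distr (measure_pmf ?p) (count_space UNIV) T) borel (\<lambda>x. x)"
    by (subst distr_distr) (auto simp: comp_def)
  also have "\<dots> = ?M"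
    using \<open>map_pmf T ?p = ?p\<close> by (simp flip: map_pmf_rep_eq)
  finally have "distr ?M borel T = ?M" .
  moreover have "emeasure (measure_pmf ?p) {0..<1} = 1"
    using assms by (simp add: emeasure_pmf_of_set Int_absorb2)
  ultimately show ?thesis
    unfolding T_invariant_prob_def
    by (simp add: emeasure_distr prob_space.prob_space_distr prob_space_measure_pmf)
qed

lemma m_A: "m A = 3/4"
proof -
  define M0 where "M0 = distr (measure_pmf (pmf_of_set {1/3, 2/3 :: real})) borel (\<lambda>x. x)"
  have "T_invariant_prob M0"
    unfolding M0_def by (rule T_invariant_prob_uniform_orbit) (auto simp: T_one_third T_two_thirds)
  moreover have "integral\<^sup>L M0 A = 3/4"
    unfolding M0_def using continuous_A[of UNIV]
    by (simp add: integral_distr integral_pmf_of_set borel_measurable_continuous_onI A_one_third A_two_thirds)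
  moreover have "integral\<^sup>L M A \<le> 3/4" if "T_invariant_prob M" for M
  proof (rule T_invariant_integral_le_coboundary[OF that])
    show "A \<in> borel_measurable borel" "(\<lambda>x. cos (4 * pi * x) / 6) \<in> borel_measurable borel"
      using continuous_A[of UNIV] by (auto intro!: borel_measurable_continuous_onI continuous_intros)
    show "\<bar>A x\<bar> \<le> 1" "\<bar>cos (4 * pi * x) / 6\<bar> \<le> 1" for x
      unfolding A_def by (auto simp: abs_square_le_1 abs_cos_le_one[THEN order_trans])
  qed (rule A_le_coboundary)
  ultimately show ?thesis
    unfolding m_def by (intro cSup_eq_maximum) auto
qed

lemma eta_iter: "(eta ^^ i) x = 2/3 + (x - 2/3) / 4 ^ i"
  by (induction i) (auto simp: eta_def field_simps)

lemma eta_iter_reflect: "(eta ^^ i) (2 - 2 * x) = 2 - 2 * (eta ^^ i) x"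
  unfolding eta_iter by (simp add: field_simps)

lemma eta_iter_tendsto: "(\<lambda>i. (eta ^^ i) x) \<longlonglongrightarrow> 2/3"
proof -
  have "(\<lambda>i. (x - 2/3) * (1/4) ^ i) \<longlonglongrightarrow> (x - 2/3) * 0"
    by (intro tendsto_mult_left LIMSEQ_power_zero) simp
  then have "(\<lambda>i. 2/3 + (x - 2/3) * (1/4) ^ i) \<longlonglongrightarrow> 2/3 + 0"
    by (intro tendsto_add tendsto_const) simp
  then show ?thesis
    by (simp add: eta_iter power_divide)
qed

lemma F_eq_A_eta: "F x = A (x / 2) + A (eta x)"
  unfolding F_def eta_def ..

lemma F_two_thirds: "F (2/3) = 2 * m_hat"
  unfolding F_def m_hat_def by simp

lemma F_lipschitz: "\<bar>F u - F v\<bar> \<le> 3/2 * pi * \<bar>u - v\<bar>"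
proof -
  have "\<bar>F u - F v\<bar> \<le> \<bar>A (u/2) - A (v/2)\<bar> + \<bar>A (u/4 + 1/2) - A (v/4 + 1/2)\<bar>"
    unfolding F_def by linarith
  also have "\<dots> \<le> 2 * pi * \<bar>u/2 - v/2\<bar> + 2 * pi * \<bar>(u/4 + 1/2) - (v/4 + 1/2)\<bar>"
    by (intro add_mono A_lipschitz)
  also have "\<dots> = 3/2 * pi * \<bar>u - v\<bar>"
    by (simp add: abs_divide flip: diff_divide_distrib)
  finally show ?thesis .
qed

lemma V2_term_bound: "\<bar>F ((eta ^^ i) x) - 2 * m_hat\<bar> \<le> 6 * \<bar>x - 2/3\<bar> * (1/4) ^ i"
proof -
  have "\<bar>F ((eta ^^ i) x) - 2 * m_hat\<bar> \<le> 3/2 * pi * \<bar>(eta ^^ i) x - 2/3\<bar>"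
    using F_lipschitz[of _ "2/3"] by (simp add: F_two_thirds)
  also have "\<dots> = 3/2 * pi * (\<bar>x - 2/3\<bar> * (1/4) ^ i)"
    by (simp add: eta_iter abs_divide power_divide)
  also have "\<dots> \<le> 6 * (\<bar>x - 2/3\<bar> * (1/4) ^ i)"
    using pi_less_4 by (intro mult_right_mono) auto
  finally show ?thesis by simp
qed

lemma V2_sums: "(\<lambda>i. F ((eta ^^ i) x) - 2 * m_hat) sums V2 x"
proof -
  have "summable (\<lambda>i. F ((eta ^^ i) x) - 2 * m_hat)"
    by (rule summable_comparison_test[OF _ summable_mult[OF summable_geometric]])
       (use V2_term_bound in auto)
  moreover from this have "V2 x = (\<Sum>i. F ((eta ^^ i) x) - 2 * m_hat)"
    unfolding V2_def by (intro limI summable_LIMSEQ)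
  ultimately show ?thesis
    by (simp add: summable_sums)
qed

lemma continuous_on_V2: "continuous_on {0..1} V2"
proof -
  have "uniform_limit {0..1} (\<lambda>n x. \<Sum>i<n. F ((eta ^^ i) x) - 2 * m_hat)
          (\<lambda>x. \<Sum>i. F ((eta ^^ i) x) - 2 * m_hat) sequentially"
  proof (rule Weierstrass_m_test)
    fix i :: nat and x :: real
    assume "x \<in> {0..1}"
    then have "6 * \<bar>x - 2/3\<bar> * (1/4) ^ i \<le> 6 * (1/4::real) ^ i"
      by (intro mult_right_mono) auto
    then show "norm (F ((eta ^^ i) x) - 2 * m_hat) \<le> 6 * (1/4) ^ i"
      using V2_term_bound[of i x] by (simp only: real_norm_def)
  qed (intro summable_mult summable_geometric, simp)
  moreover have "continuous_on {0..1} (\<lambda>x. F ((eta ^^ i) x))" for i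
    unfolding F_def eta_iter by (intro continuous_intros continuous_on_compose2[OF continuous_A]) auto
  ultimately have "continuous_on {0..1} (\<lambda>x. \<Sum>i. F ((eta ^^ i) x) - 2 * m_hat)"
    by (intro uniform_limit_theorem) (auto intro!: always_eventually continuous_intros)
  then show ?thesis
    using V2_sums sums_unique by (metis (no_types, lifting) continuous_on_cong)
qed

lemma V2_shift: "V2 x = F x - 2 * m_hat + V2 (eta x)"
proof -
  have "(\<lambda>i. F ((eta ^^ Suc i) x) - 2 * m_hat) sums V2 (eta x)"
    using V2_sums[of "eta x"] by (simp only: funpow_Suc_right o_apply)
  then have "(\<lambda>i. F ((eta ^^ i) x) - 2 * m_hat) sums (V2 (eta x) + (F x - 2 * m_hat))"
    by (subst (asm) sums_Suc_iff) simp
  then show ?thesis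
    using V2_sums sums_unique2 by fastforce
qed

lemma F_reflect: "F (2 - 2 * w) = A w + A (w / 2)"
proof -
  have "(2 - 2 * w) / 2 = 1 - w" and "(2 - 2 * w) / 4 + 1 / 2 = 1 - w / 2"
    by (simp_all add: field_simps)
  then show ?thesis
    unfolding F_def by (simp only: A_reflect)
qed

(* F (2 - 2 w) - F w = A w - A (eta w) and eta commutes with w |-> 2 - 2 w, so the difference of
   the two series telescopes. *)
lemma V2_reflect: "V2 (2 - 2 * w) = V2 w + A w - m_hat"
proof -
  let ?w = "\<lambda>i. (eta ^^ i) w"
  have "(\<lambda>i. (F ((eta ^^ i) (2 - 2 * w)) - 2 * m_hat) - (F (?w i) - 2 * m_hat))
          sums (V2 (2 - 2 * w) - V2 w)"
    by (intro sums_diff V2_sums)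
  moreover have "F ((eta ^^ i) (2 - 2 * w)) - 2 * m_hat - (F (?w i) - 2 * m_hat)
      = A (?w i) - A (?w (Suc i))" for i
    unfolding eta_iter_reflect F_reflect by (simp add: F_eq_A_eta)
  moreover have "(\<lambda>i. A (?w i) - A (?w (Suc i))) sums (A w - A (2/3))"
    using telescope_sums'[OF continuous_on_tendsto_compose[OF continuous_A[of UNIV] eta_iter_tendsto]]
    by simp
  ultimately have "V2 (2 - 2 * w) - V2 w = A w - A (2/3)"
    using sums_unique2 by force
  then show ?thesis
    unfolding m_hat_eq A_two_thirds by simp
qed

lemma V1_eq_V2: "V1 x = V2 (1 - x)"
proof -
  have "2 - 2 * ((x + 1) / 2) = 1 - x"
    by (simp add: field_simps)
  from V2_reflect[of "(x + 1) / 2", unfolded this] show ?thesis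
    unfolding V1_def by simp
qed

lemma A_plus_V2_tau1: "A (x / 2) + V2 (1 - x / 2) = V2 x + m_hat"
proof -
  have "2 - 2 * eta x = 1 - x / 2"
    unfolding eta_def by simp
  from V2_reflect[of "eta x", unfolded this] show ?thesis
    using V2_shift[of x] unfolding F_eq_A_eta by simp
qed

lemma A_plus_V2_tau2: "A ((x + 1) / 2) + V2 ((x + 1) / 2) = V2 (1 - x) + m_hat"
  using V1_eq_V2[of x] unfolding V1_def by simp

lemma F_diff_symmetric:
  "F (c + a) - F (c - a) = sin (2 * pi * c) * sin (2 * pi * a) + sin (pi * c) * sin (pi * a)"
proof -
  have "(c + a) / 2 + (c - a) / 2 = c" "(c + a) / 2 - (c - a) / 2 = a"
    by (simp_all add: field_simps)
  from A_diff[of "(c + a) / 2" "(c - a) / 2", unfolded this]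
  have half: "A ((c + a) / 2) - A ((c - a) / 2) = sin (2 * pi * c) * sin (2 * pi * a)" .
  have "2 * pi * ((c + a) / 4 + 1 / 2 + ((c - a) / 4 + 1 / 2)) = pi * c + 2 * pi"
    "2 * pi * ((c + a) / 4 + 1 / 2 - ((c - a) / 4 + 1 / 2)) = pi * a"
    by (simp_all add: field_simps)
  from A_diff[of "(c + a) / 4 + 1 / 2" "(c - a) / 4 + 1 / 2", unfolded this sin_periodic]
  have quarter: "A ((c + a) / 4 + 1 / 2) - A ((c - a) / 4 + 1 / 2) = sin (pi * c) * sin (pi * a)" .
  show ?thesis
    unfolding F_def using half quarter by linarith
qed

lemma F_diff_symmetric_half: "F (1/2 + a) - F (1/2 - a) = sin (pi * a)"
  using F_diff_symmetric[of "1/2" a] by simp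

lemma F_diff_symmetric_lower:
  assumes "1/2 \<le> c" "c \<le> 2/3" "0 \<le> a" "a \<le> 1"
  shows "- (sqrt 3 * pi * a) \<le> F (c + a) - F (c - a)"
proof -
  have "sin (2 * pi * c - pi) \<le> sin (pi / 3)"
    using assms by (intro sin_monotone_2pi_le) (auto simp: field_simps)
  moreover have "sin (2 * pi * c) \<le> 0"
    using assms by (intro sin_le_zero) (auto simp: field_simps)
  ultimately have "\<bar>sin (2 * pi * c)\<bar> \<le> sqrt 3 / 2"
    by (simp add: sin_60)
  moreover have "\<bar>sin (2 * pi * a)\<bar> \<le> 2 * pi * a"
    using abs_sin_x_le_abs_x[of "2 * pi * a"] assms by simp
  ultimately have "\<bar>sin (2 * pi * c) * sin (2 * pi * a)\<bar> \<le> sqrt 3 / 2 * (2 * pi * a)"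
    unfolding abs_mult by (intro mult_mono) auto
  moreover have "0 \<le> sin (pi * c) * sin (pi * a)"
    using assms by (intro mult_nonneg_nonneg sin_ge_zero) auto
  ultimately show ?thesis
    unfolding F_diff_symmetric by (simp add: abs_le_iff)
qed

lemma V2_reflect_le:
  assumes "1/2 \<le> y" "y \<le> 1"
  shows "V2 (1 - y) \<le> V2 y"
proof -
  define s where "s = y - 1/2"
  define c where "c i = (eta ^^ i) (1/2)" for i
  define d where "d i = F (c i + s / 4 ^ i) - F (c i - s / 4 ^ i)" for i
  have s: "0 \<le> s" "s \<le> 1/2"
    using assms by (simp_all add: s_def)
  have "(eta ^^ i) y = c i + s / 4 ^ i" "(eta ^^ i) (1 - y) = c i - s / 4 ^ i" for i
    unfolding c_def s_def eta_iter by (simp_all add: field_simps)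
  then have "d sums (V2 y - V2 (1 - y))"
    using sums_diff[OF V2_sums[of y] V2_sums[of "1 - y"]] unfolding d_def by simp
  then have tail: "(\<lambda>i. d (Suc i)) sums (V2 y - V2 (1 - y) - d 0)"
    by (subst sums_Suc_iff) simp
  have "- (sqrt 3 * pi * s * (1/4) ^ Suc i) \<le> d (Suc i)" for i
  proof -
    have "1 \<le> (4::real) ^ Suc i"
      by (rule one_le_power) simp
    then have "1/2 \<le> c (Suc i)" "c (Suc i) \<le> 2/3" "s / 4 ^ Suc i \<le> 1"
      using s unfolding c_def eta_iter by (simp_all add: field_simps)
    then show ?thesis
      using F_diff_symmetric_lower[of "c (Suc i)" "s / 4 ^ Suc i"] s
      unfolding d_def by (simp add: power_divide)
  qed
  moreover have "(\<lambda>i. - (sqrt 3 * pi * s * (1/4) ^ Suc i)) sums (- (sqrt 3 * pi * s / 3))"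
    using sums_mult[OF geometric_sums[of "1/4::real"], of "- (sqrt 3 * pi * s / 4)"]
    by (simp add: field_simps)
  ultimately have "- (sqrt 3 * pi * s / 3) \<le> V2 y - V2 (1 - y) - d 0"
    using tail by (rule sums_le)
  moreover have "d 0 = sin (pi * s)"
    unfolding d_def c_def using F_diff_symmetric_half by simp
  ultimately show ?thesis
    using sin_pi_ge_linear[OF s] by simp
qed

lemma max_V2_reflect: "x \<in> {0..1} \<Longrightarrow> max (V2 x) (V2 (1 - x)) = V2 (max x (1 - x))"
  using V2_reflect_le[of x] V2_reflect_le[of "1 - x"] by (auto simp: max_def)

lemma V_eq_V2:
  assumes "x \<in> {0..1}"
  shows "V x = V2 (max x (1 - x))"
proof (cases "x < 1/2")
  case True
  then show ?thesis
    using assms unfolding V_def V1_eq_V2 by (simp add: indicator_def max_absorb2)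
next
  case False
  then show ?thesis
    using assms unfolding V_def by (simp add: indicator_def max_absorb1)
qed

theorem mainTheorem1:
  shows "m_hat = m A \<and>
    continuous_on {0..1} V \<and> V 0 = V 1 \<and>
    (\<forall>x\<in>{0..1::real}. V x = max (A (x / 2) + V (x / 2)) (A ((x + 1) / 2) + V ((x + 1) / 2)) - m A)"
proof (intro conjI ballI)
  show m: "m_hat = m A"
    by (simp add: m_A m_hat_eq)
  have "continuous_on {0..1} (\<lambda>x. V2 (max x (1 - x)))"
    by (rule continuous_on_compose2[OF continuous_on_V2]) (auto intro!: continuous_intros)
  then show "continuous_on {0..1} V"
    by (rule continuous_on_eq) (simp add: V_eq_V2)
  show "V 0 = V 1"
    using V_eq_V2[of 0] V_eq_V2[of 1] by simp
  fix x :: real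
  assume x: "x \<in> {0..1}"
  have "max (x / 2) (1 - x / 2) = 1 - x / 2" "max ((x + 1) / 2) (1 - (x + 1) / 2) = (x + 1) / 2"
    and "x / 2 \<in> {0..1}" "(x + 1) / 2 \<in> {0..1}"
    using x by (simp_all add: max_def field_simps)
  then have V_halves: "V (x / 2) = V2 (1 - x / 2)" "V ((x + 1) / 2) = V2 ((x + 1) / 2)"
    by (simp_all only: V_eq_V2)
  show "V x = max (A (x / 2) + V (x / 2)) (A ((x + 1) / 2) + V ((x + 1) / 2)) - m A"
    unfolding V_halves A_plus_V2_tau1 A_plus_V2_tau2 V_eq_V2[OF x]
      max_V2_reflect[OF x, symmetric] m[symmetric]
    by (simp add: max_add_distrib_left)
qed

end
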